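(* For $k\in\{1,\dots,8\}$, the classes $(d,e;m)\in\mathcal{E}$ with $d\geq e$, $l(m)=l(6+\frac1k)$ and $\mu(d,e;m)(6+\frac1k)>\sqrt{(6+\frac1k)/2}$ are exactly the following: for $k=7$: $(28,28;16^{\times6},3,2^{\times6})$ and $(196,196;112^{\times5},111,16^{\times7})$; for $k=6$: $(14,14;8^{\times6},2,1^{\times5})$ and $(84,84;48^{\times5},47,8^{\times6})$; for $k=5$: $(11,10;6^{\times6},1^{\times5})$; for $k=4$: $(28,28;16^{\times5},15,4^{\times4})$; for $k=3$: $(7,7;4^{\times6},1^{\times3})$; for $k=2$: $(9,9;5^{\times6},3,2)$; for $k=1$: $(4,4;3,2^{\times6})$; for $k=8$: none.
   Context: $x^{\times l}$ denotes $x$ repeated $l$ times. Weight expansion: for rational $a\geq1$ with continued fraction $[l_0;l_1,\dots,l_N]$ ($l_N\geq2$ if $N\geq1$), $w(a)=(1^{\times l_0},x_1^{\times l_1},\dots,x_N^{\times l_N})$ with $x_0=1$, $x_1=a-l_0$, $x_i=x_{i-2}-l_{i-1}x_{i-1}$ (e.g. $w(6+\frac1k)=(1^{\times6},(\frac1k)^{\times k})$). $l(a)$ is the length of $w(a)$ and $l(m)$ the number of positive entries of $m$. The set $\mathcal{E}$: a Cremona transform of an integer tuple $(\delta;n_1,\dots,n_k)$ with $n_1\geq\dots\geq n_k$ is $(2\delta-n_1-n_2-n_3;\delta-n_2-n_3,\delta-n_1-n_3,\delta-n_1-n_2,n_4,\dots,n_k)$; a Cremona move is a Cremona transform followed by a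 permutation of the entries after the semicolon. $\mathcal{E}$ consists of $(0,0;-1)$ together with all integer tuples $(d,e;m_1,\dots,m_M)$ with $d,e\geq0$, $m_1\geq\dots\geq m_M\geq0$, satisfying $\sum m_i=2(d+e)-1$, $\sum m_i^2=2de+1$, and such that $(d+e-m_1;d-m_1,e-m_1,m_2,\dots,m_M)$ reduces to $(0;-1,0,\dots,0)$ by repeated Cremona moves. $\mu(d,e;m)(a):=\langle m,w(a)\rangle/(d+e)$, the Euclidean scalar product after padding with zeros. *)

theory Defs
  imports Complex_Main "HOL-Library.Multiset"
begin

text \<open>Continued fraction of a rational a, computed with a fuel argument.
  With fuel equal to the denominator of a the expansion is complete
  (the denominator strictly decreases in each step).\<close>
fun cf_fuel :: "nat \<Rightarrow> rat \<Rightarrow> int list" where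
  "cf_fuel 0 a = []"
| "cf_fuel (Suc n) a =
     \<lfloor>a\<rfloor> # (if a = of_int \<lfloor>a\<rfloor> then [] else cf_fuel n (1 / (a - of_int \<lfloor>a\<rfloor>)))"

definition cf :: "rat \<Rightarrow> int list" where
  "cf a = cf_fuel (nat (snd (quotient_of a))) a"

fun wx :: "rat \<Rightarrow> int list \<Rightarrow> nat \<Rightarrow> rat" where
  "wx a ls 0 = 1"
| "wx a ls (Suc 0) = a - of_int (ls ! 0)"
| "wx a ls (Suc (Suc i)) = wx a ls i - of_int (ls ! Suc i) * wx a ls (Suc i)"

definition wexp :: "rat \<Rightarrow> rat list" where
  "wexp a = (let ls = cf a in
     concat (map (\<lambda>i. replicate (nat (ls ! i)) (wx a ls i)) [0..<length ls]))"

definition l_a :: "rat \<Rightarrow> nat" where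
  "l_a a = length (wexp a)"

definition l_m :: "int list \<Rightarrow> nat" where
  "l_m m = length (filter (\<lambda>x. x > 0) m)"

text \<open>Euclidean scalar product after padding with zeros (zip truncation is the same).\<close>
definition mu :: "int \<times> int \<times> int list \<Rightarrow> rat \<Rightarrow> rat" where
  "mu c a = (case c of (d, e, m) \<Rightarrow>
     sum_list (map (\<lambda>(x, y). of_int x * y) (zip m (wexp a))) / of_int (d + e))"

fun cremona_transform :: "int \<Rightarrow> int list \<Rightarrow> int \<times> int list" where
  "cremona_transform \<delta> (n1 # n2 # n3 # r) =
     (2*\<delta> - n1 - n2 - n3, (\<delta> - n2 - n3) # (\<delta> - n1 - n3) # (\<delta> - n1 - n2) # r)"
| "cremona_transform \<delta> ns = (\<delta>, ns)"

definition cremona_move :: "int \<times> int list \<Rightarrow> int \<times> int list \<Rightarrow> bool" where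
  "cremona_move t t' \<longleftrightarrow> length (snd t) \<ge> 3 \<and>
     (\<exists>ns. mset ns = mset (snd t) \<and> sorted_wrt (\<ge>) ns \<and>
        fst t' = fst (cremona_transform (fst t) ns) \<and>
        mset (snd t') = mset (snd (cremona_transform (fst t) ns)))"

definition E :: "(int \<times> int \<times> int list) set" where
  "E = {(0, 0, [-1])} \<union>
     {(d, e, m). d \<ge> 0 \<and> e \<ge> 0 \<and> m \<noteq> [] \<and> sorted_wrt (\<ge>) m \<and> (\<forall>x\<in>set m. x \<ge> 0) \<and>
        sum_list m = 2 * (d + e) - 1 \<and>
        sum_list (map (\<lambda>x. x^2) m) = 2 * d * e + 1 \<and>
        cremona_move\<^sup>*\<^sup>* (d + e - hd m, (d - hd m) # (e - hd m) # tl m)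
                         (0, (-1) # replicate (length m) 0)}"

definition good_classes :: "nat \<Rightarrow> (int \<times> int \<times> int list) set" where
  "good_classes k = (let a = 6 + 1 / (of_nat k :: rat) in
     {(d, e, filter (\<lambda>x. x > 0) m) | d e m. (d, e, m) \<in> E \<and> d \<ge> e \<and>
        l_m m = l_a a \<and> real_of_rat (mu (d, e, m) a) > sqrt (real_of_rat a / 2)})"

end

(*
  For a = 6 + 1/k the weight expansion is (1^6, (1/k)^k), so mu(d,e;m)(a) only sees the sums
  A and B of the first six and of the next k positive entries of m.  Using the Diophantine
  conditions of E, the inequality mu > sqrt(a/2) says that a positive combination of the two
  block variances, of (A - 6B)^2 and of (d - e)^2 is smaller than 12 k (6k + 1).  Hence each
  block takes two consecutive values and d - e is 0 or 1: the positive entries are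
  (c+1)^p, c^(6-p), (N+1)^r, N^(k-r).  The same inequality bounds p, r and c - kN, and the
  Diophantine conditions become a quadratic equation in N, so only finitely many classes
  remain; they are enumerated by evaluation.  Membership in E is decided by running the
  Cremona reduction, and the two spurious candidates for k = 3 are excluded because their
  Cremona orbits, up to zero entries, form a finite cycle that never reaches degree 0.
*)

theory Submission
  imports Defs
begin

section \<open>The weight expansion of 6 + 1/k\<close>

lemma quotient_of_6_plus_inverse:
  assumes "k \<ge> 1"
  shows "quotient_of (6 + 1 / of_nat k :: rat) = (6 * int k + 1, int k)"
proof -
  have "(6 + 1 / of_nat k :: rat) = Fract (6 * int k + 1) (int k)"
    using assms by (simp add: Fract_of_int_quotient field_simps)
  moreover have "coprime (6 * int k + 1) (int k)"
  proof (rule coprimeI)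
    fix c assume "c dvd 6 * int k + 1" and "c dvd int k"
    then show "is_unit c" by (metis dvd_add_right_iff dvd_mult)
  qed
  ultimately show ?thesis
    using assms by (simp add: quotient_of_Fract normalize_def)
qed

lemma cf_6_plus_inverse:
  assumes "k \<ge> 2"
  shows "cf (6 + 1 / of_nat k) = [6, int k]"
proof -
  obtain j where k: "k = Suc (Suc j)" using assms by (metis add_2_eq_Suc le_Suc_ex)
  define a where "a = (6 + 1 / of_nat k :: rat)"
  have "\<lfloor>a\<rfloor> = 6" unfolding a_def using assms by (intro floor_unique) (simp_all add: field_simps)
  moreover have "a \<noteq> 6" and "1 / (a - 6) = of_int (int k)" using assms by (simp_all add: a_def)
  moreover have "cf a = cf_fuel k a"
    using assms by (simp add: cf_def quotient_of_6_plus_inverse a_def)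
  ultimately show ?thesis
    unfolding a_def[symmetric] by (simp add: k)
qed

lemma wexp_6_plus_inverse:
  assumes "k \<ge> 1"
  shows "wexp (6 + 1 / of_nat k) = replicate 6 1 @ replicate k (1 / of_nat k)"
proof (cases "k = 1")
  case True
  have "cf 7 = [7]" using quotient_of_6_plus_inverse[of 1] by (simp add: cf_def)
  then show ?thesis using True by (simp add: wexp_def numeral_eq_Suc)
next
  case False
  then show ?thesis using assms by (simp add: wexp_def cf_6_plus_inverse upt_conv_Cons)
qed

lemma l_a_6_plus_inverse: "k \<ge> 1 \<Longrightarrow> l_a (6 + 1 / of_nat k) = 6 + k"
  by (simp add: l_a_def wexp_6_plus_inverse)

lemma sum_list_zip_replicate:
  fixes xs :: "int list" and c :: rat
  shows "length xs = n \<Longrightarrow>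
    sum_list (map (\<lambda>(x, y). of_int x * y) (zip xs (replicate n c))) = c * of_int (sum_list xs)"
  by (induction xs arbitrary: n) (auto simp: algebra_simps Suc_length_conv)

lemma mu_6_plus_inverse:
  assumes "k \<ge> 1" and "length P = 6 + k"
  shows "mu (d, e, P @ Z) (6 + 1 / of_nat k) =
    (of_int (sum_list (take 6 P)) + of_int (sum_list (drop 6 P)) / of_nat k) / of_int (d + e)"
proof -
  have "zip (P @ Z) (wexp (6 + 1 / of_nat k)) =
      zip (take 6 P) (replicate 6 1) @ zip (drop 6 P) (replicate k (1 / of_nat k))"
    using assms zip_append[of "take 6 P" "replicate 6 (1::rat)" "drop 6 P"]
    by (simp add: wexp_6_plus_inverse zip_append1)
  then show ?thesis
    using assms sum_list_zip_replicate[of "take 6 P" 6 1]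
      sum_list_zip_replicate[of "drop 6 P" k "1 / of_nat k"]
    by (simp add: mu_def)
qed

lemma sqrt_less_mu_iff:
  assumes k: "k \<ge> 1" and P: "length P = 6 + k" and de: "0 < d + e"
    and A: "sum_list (take 6 P) = A" "0 \<le> A" and B: "sum_list (drop 6 P) = B" "0 \<le> B"
  shows "sqrt (real_of_rat (6 + 1 / of_nat k) / 2) < real_of_rat (mu (d, e, P @ Z) (6 + 1 / of_nat k))
    \<longleftrightarrow> int k * (6 * int k + 1) * (d + e)^2 < 2 * (int k * A + B)^2"
proof -
  define \<kappa> s X where "\<kappa> = real k" and "s = real_of_int (d + e)"
    and "X = real k * real_of_int A + real_of_int B"
  have pos: "\<kappa> > 0" "s > 0" "X \<ge> 0" using k de A B by (simp_all add: \<kappa>_def s_def X_def)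
  have "real_of_rat (mu (d, e, P @ Z) (6 + 1 / of_nat k)) = X / (\<kappa> * s)"
    unfolding mu_6_plus_inverse[OF k P] A(1) B(1) using pos
    by (simp add: of_rat_add of_rat_divide of_rat_mult \<kappa>_def s_def X_def field_simps)
  moreover have "real_of_rat (6 + 1 / of_nat k) / 2 = (6 * \<kappa> + 1) / (2 * \<kappa>)"
    using pos by (simp add: of_rat_add of_rat_divide \<kappa>_def field_simps of_rat_mult)
  ultimately have "sqrt (real_of_rat (6 + 1 / of_nat k) / 2) < real_of_rat (mu (d, e, P @ Z) (6 + 1 / of_nat k))
      \<longleftrightarrow> sqrt ((6 * \<kappa> + 1) / (2 * \<kappa>)) < X / (\<kappa> * s)"
    by (simp only:)
  also have "\<dots> \<longleftrightarrow> (6 * \<kappa> + 1) / (2 * \<kappa>) < (X / (\<kappa> * s))^2"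
  proof -
    have "0 \<le> X / (\<kappa> * s)" using pos by simp
    then show ?thesis by (metis abs_of_nonneg real_sqrt_abs real_sqrt_less_iff)
  qed
  also have "\<dots> \<longleftrightarrow> \<kappa> * (\<kappa> * (6 * \<kappa> + 1) * s^2) < \<kappa> * (2 * X^2)"
    using pos by (simp add: field_simps power2_eq_square)
  also have "\<dots> \<longleftrightarrow> \<kappa> * (6 * \<kappa> + 1) * s^2 < 2 * X^2"
    using pos by (simp add: mult.assoc)
  also have "\<dots> \<longleftrightarrow> int k * (6 * int k + 1) * (d + e)^2 < 2 * (int k * A + B)^2"
  proof -
    have "real_of_int (int k * (6 * int k + 1) * (d + e)^2) = \<kappa> * (6 * \<kappa> + 1) * s^2"
      and "real_of_int (2 * (int k * A + B)^2) = 2 * X^2"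
      by (simp_all add: \<kappa>_def s_def X_def)
    then show ?thesis by (metis of_int_less_iff)
  qed
  finally show ?thesis .
qed

section \<open>Lists with small spread\<close>

lemma sum_list_square_shift:
  fixes xs :: "int list"
  shows "sum_list (map (\<lambda>x. (n * x - s)^2) xs) =
    n^2 * sum_list (map (\<lambda>x. x^2) xs) - 2 * n * s * sum_list xs + int (length xs) * s^2"
  by (induction xs) (simp_all add: power2_eq_square algebra_simps)

text \<open>n \<Sigma>x^2 - (\<Sigma>x)^2 = (1/n) \<Sigma>(n x - \<Sigma>x)^2, and the summands of the first and the
  last entry alone contribute at least n^2 (hd - last)^2 / 2.\<close>

lemma spread_le_variance:
  fixes xs :: "int list"
  assumes "xs \<noteq> []"
  shows "int (length xs) * (hd xs - last xs)^2
    \<le> 2 * (int (length xs) * sum_list (map (\<lambda>x. x^2) xs) - (sum_list xs)^2)"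
proof -
  define n s where "n = int (length xs)" and "s = sum_list xs"
  have n: "n > 0" using assms by (simp add: n_def)
  have var: "sum_list (map (\<lambda>x. (n * x - s)^2) xs) = n * (n * sum_list (map (\<lambda>x. x^2) xs) - s^2)"
    unfolding sum_list_square_shift n_def[symmetric] s_def[symmetric]
    by (simp add: power2_eq_square algebra_simps)
  have "(n * hd xs - s)^2 + (n * last xs - s)^2 \<le> sum_list (map (\<lambda>x. (n * x - s)^2) xs)"
  proof (cases "length xs = 1")
    case True
    then obtain a where "xs = [a]" by (cases xs) auto
    then show ?thesis by (simp add: n_def s_def)
  next
    case False
    with assms obtain a mid b where xs: "xs = a # mid @ [b]"
      by (metis One_nat_def append_butlast_last_id length_Cons list.exhaust list.size(3))
    have "0 \<le> sum_list (map (\<lambda>x. (n * x - s)^2) mid)" by (induction mid) auto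
    then show ?thesis by (simp add: xs)
  qed
  moreover have "(n * (hd xs - last xs))^2 \<le> 2 * ((n * hd xs - s)^2 + (n * last xs - s)^2)"
    using zero_le_power2[of "n * hd xs + n * last xs - 2 * s"]
    by (simp add: power2_eq_square algebra_simps)
  ultimately have "n * (n * (hd xs - last xs)^2)
      \<le> n * (2 * (n * sum_list (map (\<lambda>x. x^2) xs) - s^2))"
    unfolding var by (simp add: power2_eq_square algebra_simps)
  then show ?thesis using n by (simp add: n_def s_def)
qed

lemma int_square_less_2: "(x::int)^2 < 2 \<Longrightarrow> \<bar>x\<bar> \<le> 1"
  using power_mono[of 2 "\<bar>x\<bar>" 2] by (cases "\<bar>x\<bar> \<ge> 2") auto

lemma sorted_desc_hd_last:
  fixes xs :: "'a::linorder list"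
  assumes "sorted_wrt (\<ge>) xs" and "x \<in> set xs"
  shows "last xs \<le> x" and "x \<le> hd xs"
proof -
  show "last xs \<le> x" using assms by (cases xs rule: rev_cases) (auto simp: sorted_wrt_append)
  show "x \<le> hd xs" using assms by (cases xs) auto
qed

lemma sorted_desc_two_values:
  fixes xs :: "int list"
  assumes "sorted_wrt (\<ge>) xs" and "\<forall>x\<in>set xs. x = c \<or> x = c + 1"
  shows "\<exists>p \<le> length xs. xs = replicate p (c + 1) @ replicate (length xs - p) c"
  using assms
proof (induction xs)
  case (Cons x xs)
  then obtain p where p: "p \<le> length xs" "xs = replicate p (c + 1) @ replicate (length xs - p) c"
    by auto
  show ?case
  proof (cases "x = c")
    case True
    with Cons.prems have "\<forall>y\<in>set (x # xs). y = c" by fastforce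
    then have "x # xs = replicate 0 (c + 1) @ replicate (length (x # xs) - 0) c"
      by (simp add: replicate_length_same)
    then show ?thesis by blast
  next
    case False
    with Cons.prems have "x = c + 1" by simp
    with p show ?thesis by (intro exI[of _ "Suc p"]) simp
  qed
qed simp

lemma sorted_desc_spread_le_1:
  fixes xs :: "int list"
  assumes "sorted_wrt (\<ge>) xs" and "xs \<noteq> []" and "\<bar>hd xs - last xs\<bar> \<le> 1"
  shows "\<exists>p < length xs. xs = replicate p (last xs + 1) @ replicate (length xs - p) (last xs)"
proof -
  have "\<forall>x\<in>set xs. x = last xs \<or> x = last xs + 1"
    using assms sorted_desc_hd_last[OF assms(1)] by fastforce
  then obtain p where p: "p \<le> length xs"
    and xs: "xs = replicate p (last xs + 1) @ replicate (length xs - p) (last xs)"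
    using sorted_desc_two_values[OF assms(1)] by blast
  have "p \<noteq> length xs"
  proof
    assume "p = length xs"
    then have "last xs = last xs + 1" using assms(2) xs
      by (metis append.right_neutral diff_self_eq_0 last_replicate length_0_conv replicate_0)
    then show False by simp
  qed
  with p have "p < length xs" by simp
  with xs show ?thesis by blast
qed

lemma sorted_desc_unique:
  fixes xs ys :: "'a::linorder list"
  assumes "mset xs = mset ys" and "sorted_wrt (\<ge>) xs" and "sorted_wrt (\<ge>) ys"
  shows "xs = ys"
proof -
  have "sorted (rev xs)" and "sorted (rev ys)" using assms(2,3) by (simp_all add: sorted_wrt_rev)
  then have "sort (rev ys) = rev xs" by (intro properties_for_sort) (simp_all add: assms(1))
  moreover have "sort (rev ys) = rev ys" by (rule sorted_sort_id) fact
  ultimately show ?thesis by simp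
qed

lemma filter_positive_padded:
  "\<forall>x\<in>set P. (x::int) > 0 \<Longrightarrow> filter (\<lambda>x. x > 0) (P @ replicate z 0) = P"
  by (induction z) (simp_all add: filter_empty_conv)

lemma sorted_nonneg_padded:
  fixes m :: "int list"
  assumes "sorted_wrt (\<ge>) m" and "\<forall>x\<in>set m. x \<ge> 0"
  shows "m = filter (\<lambda>x. x > 0) m @ replicate (length m - length (filter (\<lambda>x. x > 0) m)) 0"
  using assms
proof (induction m)
  case (Cons x m)
  show ?case
  proof (cases "x > 0")
    case True
    then show ?thesis using Cons by simp
  next
    case False
    with Cons.prems have zero: "\<forall>y\<in>set (x # m). y = 0" by fastforce
    then have "filter (\<lambda>x. x > 0) (x # m) = []" by (auto simp: filter_empty_conv)
    moreover have "replicate (length (x # m)) 0 = x # m" using zero by (rule replicate_length_same)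
    ultimately show ?thesis by (metis append_Nil diff_zero list.size(3))
  qed
qed simp

section \<open>The threshold inequality\<close>

text \<open>By threshold_defect_eq this is 6 (k (6k+1) (d+e)^2 - 2 (k A + B)^2) for the blocks T, U of a
  class in E; written this way it is a sum of nonnegative terms minus 12 k (6k+1).\<close>

definition threshold_defect :: "nat \<Rightarrow> int list \<Rightarrow> int list \<Rightarrow> int \<Rightarrow> int" where
  "threshold_defect k T U \<delta> =
     (let K = int k; W = K * (6 * K + 1); A = sum_list T; B = sum_list U
      in 2 * W * (6 * sum_list (map (\<lambda>x. x^2) T) - A^2)
       + 12 * (6 * K + 1) * (K * sum_list (map (\<lambda>x. x^2) U) - B^2)
       + 2 * K * (A - 6 * B)^2 + 6 * W * \<delta>^2 - 12 * W)"

lemma threshold_defect_eq: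
  assumes "sum_list (map (\<lambda>x. x^2) (T @ U)) = 2 * d * e + 1"
  shows "threshold_defect k T U (d - e) =
    6 * (int k * (6 * int k + 1) * (d + e)^2 - 2 * (int k * sum_list T + sum_list U)^2)"
proof -
  define Q1 Q2 where "Q1 = sum_list (map (\<lambda>x. x^2) T)" and "Q2 = sum_list (map (\<lambda>x. x^2) U)"
  have Q1: "Q1 = 2 * d * e + 1 - Q2" using assms by (simp add: Q1_def Q2_def)
  show ?thesis unfolding threshold_defect_def Let_def Q1_def[symmetric] Q2_def[symmetric] Q1
    by (simp add: power2_eq_square algebra_simps)
qed

lemma threshold_defect_negative:
  assumes T: "length T = 6" and U: "length U = k" "k \<ge> 1"
    and neg: "threshold_defect k T U \<delta> < 0"
  shows "\<bar>hd T - last T\<bar> \<le> 1" and "\<bar>hd U - last U\<bar> \<le> 1" and "\<bar>\<delta>\<bar> \<le> 1"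
proof -
  define K W where "K = int k" and "W = int k * (6 * int k + 1)"
  define vT vU where "vT = 6 * sum_list (map (\<lambda>x. x^2) T) - (sum_list T)^2"
    and "vU = K * sum_list (map (\<lambda>x. x^2) U) - (sum_list U)^2"
  have K: "K \<ge> 1" and W: "W > 0" using U by (simp_all add: K_def W_def)
  have "T \<noteq> []" and "U \<noteq> []" using T U by auto
  then have spreadT: "6 * (hd T - last T)^2 \<le> 2 * vT"
    and spreadU: "K * (hd U - last U)^2 \<le> 2 * vU"
    using spread_le_variance[of T] spread_le_variance[of U] T U by (simp_all add: vT_def vU_def K_def)
  have "0 \<le> 6 * (hd T - last T)^2" and "0 \<le> K * (hd U - last U)^2" using K by simp_all
  then have vT: "vT \<ge> 0" and vU: "vU \<ge> 0" using spreadT spreadU by linarith+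
  have terms: "0 \<le> 2 * W * vT" "0 \<le> 12 * (6 * K + 1) * vU"
    "0 \<le> 2 * K * (sum_list T - 6 * sum_list U)^2" "0 \<le> 6 * W * \<delta>^2"
    using K W vT vU by simp_all
  have sum: "2 * W * vT + 12 * (6 * K + 1) * vU + 2 * K * (sum_list T - 6 * sum_list U)^2
      + 6 * W * \<delta>^2 < 12 * W"
    using neg by (simp add: threshold_defect_def Let_def K_def W_def vT_def vU_def)
  have "2 * W * vT < 12 * W" using sum terms by linarith
  then have "vT < 6" using W by simp
  then have "6 * (hd T - last T)^2 < 12" using spreadT by simp
  then show "\<bar>hd T - last T\<bar> \<le> 1" by (intro int_square_less_2) simp
  have "12 * (6 * K + 1) * vU < 12 * W" using sum terms by linarith
  also have "\<dots> = 12 * (6 * K + 1) * K" by (simp add: W_def K_def)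
  finally have "vU < K" using K mult_less_cancel_left_pos[of "12 * (6 * K + 1)" vU K] by simp
  then have "K * (hd U - last U)^2 < K * 2" using spreadU by simp
  then show "\<bar>hd U - last U\<bar> \<le> 1" using K by (intro int_square_less_2) simp
  have "6 * W * \<delta>^2 < 12 * W" using sum terms by linarith
  then show "\<bar>\<delta>\<bar> \<le> 1" using W by (intro int_square_less_2) simp
qed

lemma E_paddedD:
  assumes "(d, e, P @ replicate z 0) \<in> E" and "P \<noteq> []" and "\<forall>x\<in>set P. x > 0"
  shows "sorted_wrt (\<ge>) P" and "sum_list P = 2 * (d + e) - 1"
    and "sum_list (map (\<lambda>x. x^2) P) = 2 * d * e + 1" and "0 < d + e"
proof -
  have "P @ replicate z 0 \<noteq> [-1]" using assms(2,3) by (cases P) auto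
  then have "sorted_wrt (\<ge>) (P @ replicate z 0)" and sum: "sum_list P = 2 * (d + e) - 1"
    and "sum_list (map (\<lambda>x. x^2) P) = 2 * d * e + 1"
    using assms(1) by (auto simp: E_def sum_list_replicate)
  then show "sorted_wrt (\<ge>) P" and "sum_list P = 2 * (d + e) - 1"
    and "sum_list (map (\<lambda>x. x^2) P) = 2 * d * e + 1"
    by (simp_all add: sorted_wrt_append)
  obtain x xs where "P = x # xs" using assms(2) by (cases P) auto
  moreover have "0 \<le> sum_list xs"
    using assms(3) \<open>P = x # xs\<close> by (intro sum_list_nonneg) fastforce
  ultimately have "0 < sum_list P" using assms(3) by simp
  then show "0 < d + e" using sum by simp
qed

lemma mu_above_threshold_iff:
  assumes k: "k \<ge> 1" and len: "length P = 6 + k" and pos: "\<forall>x\<in>set P. x > 0"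
    and E: "(d, e, P @ replicate z 0) \<in> E"
  shows "sqrt (real_of_rat (6 + 1 / of_nat k) / 2) < real_of_rat (mu (d, e, P @ replicate z 0) (6 + 1 / of_nat k))
    \<longleftrightarrow> threshold_defect k (take 6 P) (drop 6 P) (d - e) < 0"
proof -
  have "P \<noteq> []" using len by auto
  note rel = E_paddedD[OF E this pos]
  have "0 \<le> sum_list (take 6 P)" "0 \<le> sum_list (drop 6 P)"
    using pos by (auto intro!: sum_list_nonneg dest!: in_set_takeD in_set_dropD)
  then have "sqrt (real_of_rat (6 + 1 / of_nat k) / 2) < real_of_rat (mu (d, e, P @ replicate z 0) (6 + 1 / of_nat k))
    \<longleftrightarrow> int k * (6 * int k + 1) * (d + e)^2 < 2 * (int k * sum_list (take 6 P) + sum_list (drop 6 P))^2"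
    using sqrt_less_mu_iff[OF k len rel(4)] by blast
  also have "\<dots> \<longleftrightarrow> threshold_defect k (take 6 P) (drop 6 P) (d - e) < 0"
  proof -
    define X Y where "X = int k * (6 * int k + 1) * (d + e)^2"
      and "Y = (int k * sum_list (take 6 P) + sum_list (drop 6 P))^2"
    have "threshold_defect k (take 6 P) (drop 6 P) (d - e) = 6 * (X - 2 * Y)"
      unfolding X_def Y_def by (rule threshold_defect_eq) (simp add: rel(3))
    then show ?thesis unfolding X_def[symmetric] Y_def[symmetric] by simp
  qed
  finally show ?thesis .
qed

section \<open>Profiles\<close>

definition profile :: "nat \<Rightarrow> nat \<Rightarrow> nat \<Rightarrow> int \<Rightarrow> int \<Rightarrow> int list" where
  "profile k p r c N = replicate p (c + 1) @ replicate (6 - p) c @ replicate r (N + 1) @ replicate (k - r) N"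

definition profile_defect :: "nat \<Rightarrow> nat \<Rightarrow> nat \<Rightarrow> int \<Rightarrow> int \<Rightarrow> int" where
  "profile_defect k p r t \<delta> =
     (let K = int k; W = K * (6 * K + 1); p = int p; r = int r
      in 2 * W * (p * (6 - p)) + 12 * (6 * K + 1) * (r * (K - r)) + 2 * K * (6 * t + p - 6 * r)^2
       + 6 * W * \<delta>^2 - 12 * W)"

text \<open>For a class in E, 8 \<Sigma>m^2 - (\<Sigma>m + 1)^2 + 4 (d - e)^2 - 8 = 0; for a profile with
  c = k N + t this is a quadratic equation in N with the following coefficients.\<close>

definition quadratic_coeffs :: "nat \<Rightarrow> nat \<Rightarrow> nat \<Rightarrow> int \<Rightarrow> int \<Rightarrow> int \<times> int \<times> int" where
  "quadratic_coeffs k p r t \<delta> =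
     (let K = int k; p = int p; r = int r
      in (K * (8 - K), 12 * K * t + 2 * p * K + 16 * r - 14 * K * r - 14 * K,
          48 * t^2 + 16 * p * t + 8 * p + 8 * r - (6 * t + p + r + 1)^2 + 4 * \<delta>^2 - 8))"

definition quad_eval :: "int \<times> int \<times> int \<Rightarrow> int \<Rightarrow> int" where
  "quad_eval = (\<lambda>(a, b, c) x. a * x^2 + b * x + c)"

lemma take_profile: "p \<le> 6 \<Longrightarrow> take 6 (profile k p r c N) = replicate p (c + 1) @ replicate (6 - p) c"
  by (simp add: profile_def)

lemma drop_profile: "p \<le> 6 \<Longrightarrow> drop 6 (profile k p r c N) = replicate r (N + 1) @ replicate (k - r) N"
  by (simp add: profile_def)

lemma threshold_defect_profile:
  assumes "p \<le> 6" and "r \<le> k"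
  shows "threshold_defect k (take 6 (profile k p r (int k * N + t) N)) (drop 6 (profile k p r (int k * N + t) N)) \<delta>
    = profile_defect k p r t \<delta>"
  using assms
  by (simp add: take_profile drop_profile threshold_defect_def profile_defect_def Let_def
      sum_list_replicate power2_eq_square algebra_simps)

lemma quadratic_profile:
  assumes "p \<le> 6" and "r \<le> k"
  shows "8 * sum_list (map (\<lambda>x. x^2) (profile k p r (int k * N + t) N))
      - (sum_list (profile k p r (int k * N + t) N) + 1)^2 + 4 * \<delta>^2 - 8
    = quad_eval (quadratic_coeffs k p r t \<delta>) N"
  using assms
  by (simp add: profile_def quad_eval_def quadratic_coeffs_def Let_def
      sum_list_replicate power2_eq_square algebra_simps)

lemma sorted_positive_profile:
  assumes sorted: "sorted_wrt (\<ge>) P" and pos: "\<forall>x\<in>set P. x > 0" and len: "length P = 6 + k"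
    and "k \<ge> 1" and "\<bar>hd (take 6 P) - last (take 6 P)\<bar> \<le> 1"
    and "\<bar>hd (drop 6 P) - last (drop 6 P)\<bar> \<le> 1"
  obtains p r c N where "P = profile k p r c N" and "p < 6" and "r < k" and "1 \<le> N" and "N \<le> c"
proof -
  define T U c N where "T = take 6 P" and "U = drop 6 P" and "c = last T" and "N = last U"
  have P: "P = T @ U" and "T \<noteq> []" "U \<noteq> []" and lT: "length T = 6" and lU: "length U = k"
    using len \<open>k \<ge> 1\<close> by (auto simp: T_def U_def)
  have "sorted_wrt (\<ge>) T" "sorted_wrt (\<ge>) U" and TU: "\<forall>x\<in>set T. \<forall>y\<in>set U. y \<le> x"
    using sorted by (simp_all add: P sorted_wrt_append)
  then obtain p r where p: "p < 6" "T = replicate p (c + 1) @ replicate (6 - p) c"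
    and r: "r < k" "U = replicate r (N + 1) @ replicate (k - r) N"
    using sorted_desc_spread_le_1 \<open>T \<noteq> []\<close> \<open>U \<noteq> []\<close> assms(5,6) lT lU
    unfolding T_def[symmetric] U_def[symmetric] c_def N_def by metis
  have "c \<in> set T" "N \<in> set U" using \<open>T \<noteq> []\<close> \<open>U \<noteq> []\<close> by (simp_all add: c_def N_def)
  then have "0 < N" and "N \<le> c" using pos TU by (auto simp: P)
  moreover have "P = profile k p r c N" using P p r by (simp add: profile_def)
  ultimately show ?thesis using that p r by simp
qed

definition admissible :: "nat \<Rightarrow> nat \<Rightarrow> nat \<Rightarrow> int \<Rightarrow> int \<Rightarrow> int \<Rightarrow> bool" where
  "admissible k p r \<delta> t N \<longleftrightarrow>
     p < 6 \<and> r < k \<and> \<delta> \<in> {0, 1} \<and> 1 \<le> N \<and> N \<le> int k * N + t \<and> profile_defect k p r t \<delta> < 0"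

lemma good_class_profile:
  assumes k: "k \<ge> 1" and good: "(d, e, P) \<in> good_classes k"
  obtains z p r t N where "(d, e, P @ replicate z 0) \<in> E"
    and "P = profile k p r (int k * N + t) N" and "admissible k p r (d - e) t N"
proof -
  from good obtain m where P: "P = filter (\<lambda>x. x > 0) m" and E: "(d, e, m) \<in> E" and "e \<le> d"
    and lm: "l_m m = l_a (6 + 1 / of_nat k)"
    and mu: "sqrt (real_of_rat (6 + 1 / of_nat k) / 2) < real_of_rat (mu (d, e, m) (6 + 1 / of_nat k))"
    by (auto simp: good_classes_def Let_def)
  define z where "z = length m - length P"
  have len: "length P = 6 + k" using lm k by (simp add: P l_m_def l_a_6_plus_inverse)
  then have "m \<noteq> [-1]" by (auto simp: P)
  with E have "sorted_wrt (\<ge>) m" and "\<forall>x\<in>set m. x \<ge> 0" by (simp_all add: E_def)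
  then have m: "m = P @ replicate z 0"
    unfolding P z_def by (rule sorted_nonneg_padded)
  have pos: "\<forall>x\<in>set P. x > 0" by (simp add: P)
  have E': "(d, e, P @ replicate z 0) \<in> E" using E m by simp
  have neg: "threshold_defect k (take 6 P) (drop 6 P) (d - e) < 0"
    using mu mu_above_threshold_iff[OF k len pos E'] m by simp
  have "length (take 6 P) = 6" and "length (drop 6 P) = k" using len by simp_all
  note bounds = threshold_defect_negative[OF this k neg]
  have "P \<noteq> []" using len by auto
  then obtain p r c N where prof: "P = profile k p r c N" and "p < 6" "r < k" "1 \<le> N" "N \<le> c"
    using sorted_positive_profile[OF E_paddedD(1)[OF E' _ pos] pos len k bounds(1,2)] by blast
  define t where "t = c - int k * N"
  have "profile_defect k p r t (d - e) < 0"
    using threshold_defect_profile[of p r k N t "d - e"] \<open>p < 6\<close> \<open>r < k\<close> neg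
    by (simp add: prof t_def)
  moreover have "d - e \<in> {0, 1}" using bounds(3) \<open>e \<le> d\<close> by auto
  ultimately have "admissible k p r (d - e) t N"
    using \<open>p < 6\<close> \<open>r < k\<close> \<open>1 \<le> N\<close> \<open>N \<le> c\<close> by (simp add: admissible_def t_def)
  moreover have "c = int k * N + t" by (simp add: t_def)
  ultimately show ?thesis using that[of z p r N t] E' prof by simp
qed

lemma profile_good_class:
  assumes k: "k \<ge> 1" and E: "(d, e, profile k p r (int k * N + t) N @ replicate z 0) \<in> E"
    and adm: "admissible k p r (d - e) t N"
  shows "(d, e, profile k p r (int k * N + t) N) \<in> good_classes k"
proof -
  define P where "P = profile k p r (int k * N + t) N"
  have "p < 6" "r < k" "d - e \<in> {0, 1}" "1 \<le> N" "N \<le> int k * N + t"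
    and neg: "profile_defect k p r t (d - e) < 0"
    using adm by (simp_all add: admissible_def)
  then have pos: "\<forall>x\<in>set P. x > 0" and len: "length P = 6 + k" and "e \<le> d"
    by (auto simp: P_def profile_def)
  have "l_m (P @ replicate z 0) = l_a (6 + 1 / of_nat k)"
    using k len unfolding l_m_def filter_positive_padded[OF pos] by (simp add: l_a_6_plus_inverse)
  moreover have "sqrt (real_of_rat (6 + 1 / of_nat k) / 2)
      < real_of_rat (mu (d, e, P @ replicate z 0) (6 + 1 / of_nat k))"
    using mu_above_threshold_iff[OF k len pos E[folded P_def]] neg
      threshold_defect_profile[of p r k N t "d - e"] \<open>p < 6\<close> \<open>r < k\<close>
    by (simp add: P_def)
  moreover have "P = filter (\<lambda>x. x > 0) (P @ replicate z 0)"
    by (rule filter_positive_padded[OF pos, symmetric])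
  ultimately show ?thesis
    using E \<open>e \<le> d\<close> unfolding good_classes_def Let_def P_def[symmetric] by blast
qed

section \<open>Enumerating the candidates\<close>

function int_sqrt_between :: "int \<Rightarrow> int \<Rightarrow> int \<Rightarrow> int list" where
  "int_sqrt_between D lo hi =
     (if hi \<le> lo then (if lo^2 = D then [lo] else [])
      else let m = (lo + hi + 1) div 2 in
        if m^2 \<le> D then int_sqrt_between D m hi else int_sqrt_between D lo (m - 1))"
  by auto
termination by (relation "measure (\<lambda>(D, lo, hi). nat (hi - lo))") auto

declare int_sqrt_between.simps [simp del]

lemma int_sqrt_between_complete:
  "0 \<le> lo \<Longrightarrow> lo \<le> y \<Longrightarrow> y \<le> hi \<Longrightarrow> y^2 = D \<Longrightarrow> y \<in> set (int_sqrt_between D lo hi)"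
proof (induction D lo hi rule: int_sqrt_between.induct)
  case (1 D lo hi)
  show ?case
  proof (cases "hi \<le> lo")
    case True
    with "1.prems" have "y = lo" by linarith
    with "1.prems" True show ?thesis by (subst int_sqrt_between.simps) simp
  next
    case False
    define m where "m = (lo + hi + 1) div 2"
    have split: "int_sqrt_between D lo hi =
        (if m^2 \<le> D then int_sqrt_between D m hi else int_sqrt_between D lo (m - 1))"
      using False by (subst int_sqrt_between.simps) (simp add: m_def Let_def)
    have "m^2 \<le> D \<longleftrightarrow> m \<le> y"
      using "1.prems" False by (simp add: m_def flip: \<open>y^2 = D\<close>)
    then show ?thesis
      unfolding split using "1.IH"[OF False m_def] "1.prems" False by (auto simp: m_def)
  qed
qed

definition int_roots :: "int \<times> int \<times> int \<Rightarrow> int list" where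
  "int_roots = (\<lambda>(a, b, c).
     if a = 0 then (if b = 0 then [] else [- c div b])
     else concat (map (\<lambda>s. [(s - b) div (2 * a), (- s - b) div (2 * a)])
                      (int_sqrt_between (b^2 - 4 * a * c) 0 (b^2 - 4 * a * c))))"

lemma int_roots_complete:
  assumes "quad_eval (a, b, c) x = 0" and "a \<noteq> 0 \<or> b \<noteq> 0"
  shows "x \<in> set (int_roots (a, b, c))"
proof (cases "a = 0")
  case True
  then have "- c = b * x" using assms(1) by (simp add: quad_eval_def)
  then show ?thesis using True assms(2) by (simp add: int_roots_def)
next
  case False
  define y where "y = \<bar>2 * a * x + b\<bar>"
  have "(2 * a * x + b)^2 = b^2 - 4 * a * c + 4 * a * quad_eval (a, b, c) x"
    by (simp add: quad_eval_def power2_eq_square algebra_simps)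
  then have y: "y^2 = b^2 - 4 * a * c" using assms(1) by (simp add: y_def)
  have "y \<le> y^2"
  proof (cases "y = 0")
    case False
    then have "1 \<le> y" by (simp add: y_def)
    then show ?thesis using mult_left_mono[of 1 y y] by (simp add: power2_eq_square)
  qed simp
  then have "y \<in> set (int_sqrt_between (b^2 - 4 * a * c) 0 (b^2 - 4 * a * c))"
    using y by (intro int_sqrt_between_complete) (simp_all add: y_def)
  moreover have "x = (y - b) div (2 * a) \<or> x = (- y - b) div (2 * a)"
    using False by (cases "2 * a * x + b \<ge> 0") (simp_all add: y_def)
  moreover have "set (int_roots (a, b, c)) = (\<Union>s \<in> set (int_sqrt_between (b^2 - 4 * a * c) 0 (b^2 - 4 * a * c)).
      {(s - b) div (2 * a), (- s - b) div (2 * a)})"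
    using False by (simp add: int_roots_def)
  ultimately show ?thesis by blast
qed

lemma profile_defect_negative:
  assumes neg: "profile_defect k p r t \<delta> < 0" and "p < 6" and "r \<le> k"
  shows "k \<ge> 1" and "\<bar>t - int r\<bar> \<le> int k"
proof -
  define K W where "K = int k" and "W = int k * (6 * int k + 1)"
  have terms: "0 \<le> 2 * W * (int p * (6 - int p))" "0 \<le> 12 * (6 * K + 1) * (int r * (K - int r))"
    "0 \<le> 6 * W * \<delta>^2"
    using assms by (simp_all add: K_def W_def)
  have "profile_defect k p r t \<delta> = 2 * W * (int p * (6 - int p))
      + 12 * (6 * K + 1) * (int r * (K - int r)) + 2 * K * (6 * t + int p - 6 * int r)^2
      + 6 * W * \<delta>^2 - 12 * W"
    by (simp add: profile_defect_def Let_def K_def W_def)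
  then have sum: "2 * K * (6 * t + int p - 6 * int r)^2 < 12 * W"
    using neg terms by linarith
  then show k: "k \<ge> 1" by (cases k) (simp_all add: K_def W_def)
  then have "2 * K * (6 * t + int p - 6 * int r)^2 < 2 * K * (6 * (6 * K + 1))"
    using sum by (simp add: W_def K_def algebra_simps)
  then have "(6 * t + int p - 6 * int r)^2 < 6 * (6 * K + 1)"
    using k by (simp add: K_def)
  also have "\<dots> \<le> (6 * K + 1)^2"
    using k mult_right_mono[of 6 "6 * K + 1" "6 * K + 1"] by (simp add: K_def power2_eq_square)
  finally have "\<bar>6 * t + int p - 6 * int r\<bar>^2 < (6 * K + 1)^2" by simp
  then have "\<bar>6 * t + int p - 6 * int r\<bar> < 6 * K + 1"
    by (rule power_less_imp_less_base) (simp add: K_def)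
  then have "6 * (t - int r) < 6 * (K + 1)" and "6 * (- K - 1) < 6 * (t - int r)"
    using assms(2) by (simp_all add: abs_less_iff algebra_simps)
  then show "\<bar>t - int r\<bar> \<le> int k"
    unfolding mult_less_cancel_left_pos[of 6, simplified] by (simp add: K_def abs_le_iff)
qed

text \<open>The leading coefficient vanishes only for k = 8, and then the linear one only for
  p = 1 and t = r + 1, where profile_defect is nonnegative.\<close>

lemma quadratic_coeffs_nondegenerate:
  assumes neg: "profile_defect k p r t \<delta> < 0" and "p < 6" and "r \<le> k"
  shows "fst (quadratic_coeffs k p r t \<delta>) \<noteq> 0 \<or> fst (snd (quadratic_coeffs k p r t \<delta>)) \<noteq> 0"
proof (rule ccontr)
  assume "\<not> ?thesis"
  then have "int k * (8 - int k) = 0"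
    and lin: "12 * int k * t + 2 * int p * int k + 16 * int r - 14 * int k * int r - 14 * int k = 0"
    by (simp_all add: quadratic_coeffs_def Let_def)
  moreover have "k \<ge> 1" using profile_defect_negative(1)[OF assms] .
  ultimately have k: "k = 8" by simp
  with lin have "6 * (t - int r - 1) = 1 - int p" by simp
  with \<open>p < 6\<close> have "p = 1" and t: "t = int r + 1" by presburger+
  have "0 \<le> 588 * (int r * (8 - int r)) + 2352 * \<delta>^2"
    using \<open>r \<le> k\<close> k by simp
  also have "\<dots> = profile_defect k p r t \<delta>"
    by (simp add: profile_defect_def Let_def k \<open>p = 1\<close> t power2_eq_square algebra_simps)
  finally show False using neg by simp
qed

text \<open>The ranges of p, r, \<delta> and t are justified by profile_defect_negative.\<close>

definition solutions :: "nat \<Rightarrow> (nat \<times> nat \<times> int \<times> int \<times> int) list" where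
  "solutions k = [(p, r, \<delta>, t, N).
     p \<leftarrow> [0..<6], r \<leftarrow> [0..<k], \<delta> \<leftarrow> [0, 1], t \<leftarrow> [int r - int k..int r + int k],
     profile_defect k p r t \<delta> < 0,
     N \<leftarrow> int_roots (quadratic_coeffs k p r t \<delta>),
     quad_eval (quadratic_coeffs k p r t \<delta>) N = 0, 1 \<le> N, N \<le> int k * N + t]"

lemma solutions_complete:
  assumes "admissible k p r \<delta> t N" and "quad_eval (quadratic_coeffs k p r t \<delta>) N = 0"
  shows "(p, r, \<delta>, t, N) \<in> set (solutions k)"
proof -
  from assms(1) have adm: "p < 6" "r < k" "\<delta> \<in> {0, 1}" "1 \<le> N" "N \<le> int k * N + t"
    "profile_defect k p r t \<delta> < 0"
    by (simp_all add: admissible_def)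
  then have "\<bar>t - int r\<bar> \<le> int k" using profile_defect_negative(2) by simp
  moreover have "N \<in> set (int_roots (quadratic_coeffs k p r t \<delta>))"
    using quadratic_coeffs_nondegenerate[of k p r t \<delta>] adm assms(2)
    by (cases "quadratic_coeffs k p r t \<delta>") (auto intro: int_roots_complete)
  ultimately show ?thesis using adm assms(2) by (auto simp: solutions_def abs_le_iff)
qed

lemma solutions_sound: "(p, r, \<delta>, t, N) \<in> set (solutions k) \<Longrightarrow> admissible k p r \<delta> t N"
  by (auto simp: solutions_def admissible_def)

text \<open>The degrees are recovered from \<Sigma>P = 2 (d + e) - 1 and \<delta> = d - e.\<close>

definition class_of :: "nat \<Rightarrow> nat \<times> nat \<times> int \<times> int \<times> int \<Rightarrow> int \<times> int \<times> int list" where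
  "class_of k = (\<lambda>(p, r, \<delta>, t, N).
     let P = profile k p r (int k * N + t) N; e = (sum_list P + 1 - 2 * \<delta>) div 4 in (e + \<delta>, e, P))"

lemma class_of_eq:
  "class_of k (p, r, \<delta>, t, N) = (d, e, P) \<longleftrightarrow>
    P = profile k p r (int k * N + t) N \<and> e = (sum_list P + 1 - 2 * \<delta>) div 4 \<and> d = e + \<delta>"
  by (auto simp: class_of_def Let_def)

definition candidates :: "nat \<Rightarrow> (int \<times> int \<times> int list) list" where
  "candidates k = map (class_of k) (solutions k)"

definition in_E_up_to_zeros :: "int \<times> int \<times> int list \<Rightarrow> bool" where
  "in_E_up_to_zeros = (\<lambda>(d, e, P). \<exists>z. (d, e, P @ replicate z 0) \<in> E)"

theorem good_classes_eq_candidates: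
  assumes k: "k \<ge> 1"
  shows "good_classes k = set (filter in_E_up_to_zeros (candidates k))"
proof (intro set_eqI iffI)
  fix x assume good: "x \<in> good_classes k"
  obtain d e P where x: "x = (d, e, P)" by (cases x)
  with good obtain z p r t N where E: "(d, e, P @ replicate z 0) \<in> E"
    and P: "P = profile k p r (int k * N + t) N" and adm: "admissible k p r (d - e) t N"
    by (auto elim: good_class_profile[OF k])
  have "p < 6" "r < k" "1 \<le> N" "N \<le> int k * N + t" using adm by (simp_all add: admissible_def)
  then have "P \<noteq> []" "\<forall>x\<in>set P. x > 0" by (auto simp: P profile_def)
  note rel = E_paddedD[OF E this]
  have "quad_eval (quadratic_coeffs k p r t (d - e)) N
      = 8 * sum_list (map (\<lambda>x. x^2) P) - (sum_list P + 1)^2 + 4 * (d - e)^2 - 8"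
    unfolding P using quadratic_profile[of p r k N t "d - e"] \<open>p < 6\<close> \<open>r < k\<close> by simp
  also have "\<dots> = 0" using rel(2,3) by (simp add: power2_eq_square algebra_simps)
  finally have "quad_eval (quadratic_coeffs k p r t (d - e)) N = 0" .
  with adm have "(p, r, d - e, t, N) \<in> set (solutions k)" by (rule solutions_complete)
  moreover have "class_of k (p, r, d - e, t, N) = (d, e, P)"
    using rel(2) P by (simp add: class_of_eq)
  ultimately have "(d, e, P) \<in> set (candidates k)"
    unfolding candidates_def set_map by (metis image_eqI)
  then show "x \<in> set (filter in_E_up_to_zeros (candidates k))"
    using E x by (auto simp: in_E_up_to_zeros_def)
next
  fix x assume x: "x \<in> set (filter in_E_up_to_zeros (candidates k))"
  then obtain d e P z where x: "x = (d, e, P)" and c: "(d, e, P) \<in> set (candidates k)"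
    and E: "(d, e, P @ replicate z 0) \<in> E"
    by (auto simp: in_E_up_to_zeros_def)
  from c obtain p r \<delta> t N where s: "(p, r, \<delta>, t, N) \<in> set (solutions k)"
    and "class_of k (p, r, \<delta>, t, N) = (d, e, P)"
    unfolding candidates_def set_map by (metis (no_types, opaque_lifting) imageE prod_cases5)
  then have P: "P = profile k p r (int k * N + t) N" and "\<delta> = d - e" by (simp_all add: class_of_eq)
  show "x \<in> good_classes k"
    using profile_good_class[OF k] E solutions_sound[OF s] by (simp add: x P \<open>\<delta> = d - e\<close>)
qed

lemma candidates_1: "candidates 1 = [(4, 4, [3] @ replicate 6 2)]" by code_simp
lemma candidates_2: "candidates 2 = [(9, 9, replicate 6 5 @ [3, 2])]" by code_simp
lemma candidates_3: "candidates 3 = [(25, 25, replicate 6 14 @ replicate 3 5),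
  (16, 16, replicate 6 9 @ replicate 3 3), (7, 7, replicate 6 4 @ replicate 3 1)]" by code_simp
lemma candidates_4: "candidates 4 = [(28, 28, replicate 5 16 @ [15] @ replicate 4 4)]" by code_simp
lemma candidates_5: "candidates 5 = [(11, 10, replicate 6 6 @ replicate 5 1)]" by code_simp
lemma candidates_6: "candidates 6 = [(14, 14, replicate 6 8 @ [2] @ replicate 5 1),
  (84, 84, replicate 5 48 @ [47] @ replicate 6 8)]" by code_simp
lemma candidates_7: "candidates 7 = [(28, 28, replicate 6 16 @ [3] @ replicate 6 2),
  (196, 196, replicate 5 112 @ [111] @ replicate 7 16)]" by code_simp
lemma candidates_8: "candidates 8 = []" by code_simp

section \<open>Cremona reduction\<close>

definition cremona_step :: "int \<times> int list \<Rightarrow> int \<times> int list" where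
  "cremona_step t = cremona_transform (fst t) (rev (sort (snd t)))"

lemma length_cremona_transform: "length (snd (cremona_transform \<delta> ns)) = length ns"
  by (cases "(\<delta>, ns)" rule: cremona_transform.cases) auto

lemma cremona_move_cremona_step:
  assumes "3 \<le> length (snd t)"
    and "fst t' = fst (cremona_step t)" and "mset (snd t') = mset (snd (cremona_step t))"
  shows "cremona_move t t'"
  using assms unfolding cremona_move_def cremona_step_def
  by (intro conjI exI[of _ "rev (sort (snd t))"]) (simp_all add: sorted_wrt_rev)

definition exceptional_state :: "int \<times> int list \<Rightarrow> bool" where
  "exceptional_state t \<longleftrightarrow> fst t = 0 \<and> sort (snd t) = sort ((-1) # replicate (length (snd t) - 1) 0)"

primrec reduces_to_exceptional :: "nat \<Rightarrow> int \<times> int list \<Rightarrow> bool" where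
  "reduces_to_exceptional 0 t \<longleftrightarrow> exceptional_state t"
| "reduces_to_exceptional (Suc n) t \<longleftrightarrow>
     exceptional_state t \<or> reduces_to_exceptional n (cremona_step t)"

lemma exceptional_state_move:
  assumes "exceptional_state t" and "4 \<le> length (snd t)"
  shows "cremona_move t (0, (-1) # replicate (length (snd t) - 1) 0)"
proof -
  define z where "z = length (snd t) - 4"
  have len: "length (snd t) - 1 = z + 3" using assms(2) by (simp add: z_def)
  have "sort (snd t) = sort ((-1) # replicate (length (snd t) - 1) 0)"
    using assms(1) unfolding exceptional_state_def by (rule conjunct2)
  also have "\<dots> = (-1) # replicate (z + 3) 0" unfolding len by (rule sorted_sort_id) simp
  finally have sort: "sort (snd t) = (-1) # replicate (z + 3) 0" .
  then have rev: "rev (sort (snd t)) = 0 # 0 # 0 # replicate z 0 @ [-1]"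
    by (simp add: numeral_eq_Suc replicate_append_same)
  have "fst t = 0" using assms(1) by (simp add: exceptional_state_def)
  then have "cremona_step t = (0, rev (sort (snd t)))"
    unfolding cremona_step_def rev by simp
  then show ?thesis
    using assms by (intro cremona_move_cremona_step) (simp_all flip: mset_sort add: sort z_def)
qed

lemma reduces_to_exceptional_moves:
  assumes "reduces_to_exceptional n t" and "4 \<le> length (snd t)"
  shows "cremona_move\<^sup>*\<^sup>* t (0, (-1) # replicate (length (snd t) - 1) 0)"
  using assms
proof (induction n arbitrary: t)
  case 0
  then show ?case using exceptional_state_move by (simp add: r_into_rtranclp)
next
  case (Suc n)
  show ?case
  proof (cases "exceptional_state t")
    case True
    then show ?thesis using exceptional_state_move Suc.prems by blast
  next
    case False
    then have "reduces_to_exceptional n (cremona_step t)" using Suc.prems by simp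
    moreover have "length (snd (cremona_step t)) = length (snd t)"
      by (simp add: cremona_step_def length_cremona_transform)
    ultimately have "cremona_move\<^sup>*\<^sup>* (cremona_step t) (0, (-1) # replicate (length (snd t) - 1) 0)"
      using Suc.IH Suc.prems by metis
    moreover have "cremona_move t (cremona_step t)"
      using Suc.prems by (intro cremona_move_cremona_step) simp_all
    ultimately show ?thesis by (meson converse_rtranclp_into_rtranclp)
  qed
qed

lemma E_by_cremona_reduction:
  assumes "0 \<le> d" "0 \<le> e" "3 \<le> length m" "sorted_wrt (\<ge>) m" "\<forall>x\<in>set m. 0 \<le> x"
    "sum_list m = 2 * (d + e) - 1" "sum_list (map (\<lambda>x. x^2) m) = 2 * d * e + 1"
    and "reduces_to_exceptional n (d + e - hd m, (d - hd m) # (e - hd m) # tl m)"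
  shows "(d, e, m) \<in> E"
proof -
  have "cremona_move\<^sup>*\<^sup>* (d + e - hd m, (d - hd m) # (e - hd m) # tl m) (0, (-1) # replicate (length m) 0)"
  proof -
    have "length ((d - hd m) # (e - hd m) # tl m) = length m + 1" using assms(3) by simp
    then show ?thesis using reduces_to_exceptional_moves[OF assms(8)] assms(3) by simp
  qed
  then show ?thesis using assms unfolding E_def by auto
qed

lemma listed_classes_in_E:
  "(4, 4, [3] @ replicate 6 2) \<in> E"
  "(9, 9, replicate 6 5 @ [3, 2]) \<in> E"
  "(7, 7, replicate 6 4 @ replicate 3 1) \<in> E"
  "(28, 28, replicate 5 16 @ [15] @ replicate 4 4) \<in> E"
  "(11, 10, replicate 6 6 @ replicate 5 1) \<in> E"
  "(14, 14, replicate 6 8 @ [2] @ replicate 5 1) \<in> E"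
  "(84, 84, replicate 5 48 @ [47] @ replicate 6 8) \<in> E"
  "(28, 28, replicate 6 16 @ [3] @ replicate 6 2) \<in> E"
  "(196, 196, replicate 5 112 @ [111] @ replicate 7 16) \<in> E"
  by (rule E_by_cremona_reduction[where n = 16]; code_simp)+

text \<open>A finite set of states, up to zero entries, that is closed under Cremona moves and
  avoids degree 0.  The condition 0 \<le> L ! 2 makes sure that zero entries never
  displace the three largest entries.\<close>

definition cremona_trap :: "(int \<times> int list) list \<Rightarrow> bool" where
  "cremona_trap S \<longleftrightarrow> (\<forall>(\<delta>, L) \<in> set S. \<delta> \<noteq> 0 \<and> 3 \<le> length L \<and> sorted_wrt (\<ge>) L \<and> 0 \<le> L ! 2 \<and>
     (\<exists>(\<delta>', L') \<in> set S. \<delta>' = fst (cremona_transform \<delta> L) \<and> sort L' = sort (snd (cremona_transform \<delta> L))))"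

definition trapped :: "(int \<times> int list) list \<Rightarrow> int \<times> int list \<Rightarrow> bool" where
  "trapped S t \<longleftrightarrow> (\<exists>(\<delta>, L) \<in> set S. \<exists>z. fst t = \<delta> \<and> mset (snd t) = mset L + replicate_mset z 0)"

lemma trapped_cremona_move:
  assumes S: "cremona_trap S" and t: "trapped S t" and move: "cremona_move t t'"
  shows "trapped S t'"
proof -
  obtain \<delta> L z where mem: "(\<delta>, L) \<in> set S" and \<delta>: "fst t = \<delta>"
    and ms: "mset (snd t) = mset L + replicate_mset z 0"
    using t by (auto simp: trapped_def)
  have "3 \<le> length L" and sorted: "sorted_wrt (\<ge>) L" and "0 \<le> L ! 2"
    and "\<exists>(\<delta>', L') \<in> set S. \<delta>' = fst (cremona_transform \<delta> L)
        \<and> sort L' = sort (snd (cremona_transform \<delta> L))"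
    using bspec[OF S[unfolded cremona_trap_def] mem] by simp_all
  moreover obtain a b c R where L: "L = a # b # c # R"
    using \<open>3 \<le> length L\<close> by (metis Suc_le_length_iff numeral_3_eq_3)
  ultimately obtain L' where L': "(2 * \<delta> - a - b - c, L') \<in> set S"
    and "sort L' = sort ((\<delta> - b - c) # (\<delta> - a - c) # (\<delta> - a - b) # R)" and "0 \<le> c"
    by auto
  then have msL': "mset L' = mset ((\<delta> - b - c) # (\<delta> - a - c) # (\<delta> - a - b) # R)"
    by (metis mset_sort)
  from move obtain ns where ns: "mset ns = mset (snd t)" "sorted_wrt (\<ge>) ns"
    and t': "fst t' = fst (cremona_transform \<delta> ns)" "mset (snd t') = mset (snd (cremona_transform \<delta> ns))"
    unfolding cremona_move_def \<delta> by blast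
  define rest where "rest = rev (sort (R @ replicate z 0))"
  have "ns = a # b # c # rest"
  proof (rule sorted_desc_unique)
    show "mset ns = mset (a # b # c # rest)" using ns(1) ms by (simp add: L rest_def)
    have "\<forall>x \<in> set R. x \<le> c" using sorted by (simp add: L)
    then show "sorted_wrt (\<ge>) (a # b # c # rest)"
      using sorted \<open>0 \<le> c\<close> by (auto simp: L rest_def sorted_wrt_rev)
  qed (rule ns(2))
  then have "fst t' = 2 * \<delta> - a - b - c"
    and "mset (snd t') = mset L' + replicate_mset z 0"
    using t' msL' by (simp_all add: rest_def)
  then show ?thesis using L' unfolding trapped_def by blast
qed

lemma trappedI:
  assumes "(\<delta>, L) \<in> set S" and "sort xs = sort L"
  shows "trapped S (\<delta>, xs @ replicate z 0)"
proof -
  have "mset xs = mset L" using assms(2) by (metis mset_sort)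
  then show ?thesis unfolding trapped_def by (intro bexI[OF _ assms(1)]) auto
qed

lemma not_in_E_by_trap:
  assumes S: "cremona_trap S" and "d \<noteq> 0"
    and start: "trapped S (d + e - hd m, (d - hd m) # (e - hd m) # tl m)"
  shows "(d, e, m) \<notin> E"
proof
  assume "(d, e, m) \<in> E"
  with \<open>d \<noteq> 0\<close> have "cremona_move\<^sup>*\<^sup>* (d + e - hd m, (d - hd m) # (e - hd m) # tl m)
      (0, (-1) # replicate (length m) 0)"
    by (auto simp: E_def)
  then have "trapped S (0, (-1) # replicate (length m) 0)"
    using start by (induction rule: rtranclp_induct) (auto intro: trapped_cremona_move[OF S])
  then show False using S by (auto simp: trapped_def cremona_trap_def)
qed

lemma listed_classes_not_in_E:
  "(16, 16, (replicate 6 9 @ replicate 3 3) @ replicate z 0) \<notin> E"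
  "(25, 25, (replicate 6 14 @ replicate 3 5) @ replicate z 0) \<notin> E"
proof -
  let ?S16 = "[(23, [9, 9, 9, 9, 9, 7, 7, 3, 3, 3]), (19, [9, 9, 7, 7, 5, 5, 5, 3, 3, 3]),
    (13, [7, 5, 5, 5, 3, 3, 3, 3, 3, 1]), (9, [5, 3, 3, 3, 3, 3, 3, 1, 1, 1]),
    (7, [3, 3, 3, 3, 3, 1, 1, 1, 1, 1]), (5, [3, 3, 1, 1, 1, 1, 1, 1, 1, 1]),
    (3, [1, 1, 1, 1, 1, 1, 1, 1, 1, -1::int])]"
  have "cremona_trap ?S16" by code_simp
  moreover have "trapped ?S16 (23, [7, 7, 9, 9, 9, 9, 9, 3, 3, 3] @ replicate z 0)"
    by (rule trappedI[where L = "[9, 9, 9, 9, 9, 7, 7, 3, 3, 3]"]) simp_all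
  ultimately show "(16, 16, (replicate 6 9 @ replicate 3 3) @ replicate z 0) \<notin> E"
    by (intro not_in_E_by_trap) (simp_all add: numeral_eq_Suc)
  let ?S25 = "[(36, [14, 14, 14, 14, 14, 11, 11, 5, 5, 5]), (30, [14, 14, 11, 11, 8, 8, 8, 5, 5, 5]),
    (21, [11, 8, 8, 8, 5, 5, 5, 5, 5, 2]), (15, [8, 5, 5, 5, 5, 5, 5, 2, 2, 2]),
    (12, [5, 5, 5, 5, 5, 2, 2, 2, 2, 2]), (9, [5, 5, 2, 2, 2, 2, 2, 2, 2, 2]),
    (6, [2, 2, 2, 2, 2, 2, 2, 2, 2, -1::int])]"
  have "cremona_trap ?S25" by code_simp
  moreover have "trapped ?S25 (36, [11, 11, 14, 14, 14, 14, 14, 5, 5, 5] @ replicate z 0)"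
    by (rule trappedI[where L = "[14, 14, 14, 14, 14, 11, 11, 5, 5, 5]"]) simp_all
  ultimately show "(25, 25, (replicate 6 14 @ replicate 3 5) @ replicate z 0) \<notin> E"
    by (intro not_in_E_by_trap) (simp_all add: numeral_eq_Suc)
qed

theorem lemma7p3:
  shows "good_classes 7 = {(28, 28, replicate 6 16 @ [3] @ replicate 6 2),
                           (196, 196, replicate 5 112 @ [111] @ replicate 7 16)}
   \<and> good_classes 6 = {(14, 14, replicate 6 8 @ [2] @ replicate 5 1),
                           (84, 84, replicate 5 48 @ [47] @ replicate 6 8)}
   \<and> good_classes 5 = {(11, 10, replicate 6 6 @ replicate 5 1)}
   \<and> good_classes 4 = {(28, 28, replicate 5 16 @ [15] @ replicate 4 4)}
   \<and> good_classes 3 = {(7, 7, replicate 6 4 @ replicate 3 1)}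
   \<and> good_classes 2 = {(9, 9, replicate 6 5 @ [3, 2])}
   \<and> good_classes 1 = {(4, 4, [3] @ replicate 6 2)}
   \<and> good_classes 8 = {}"
proof -
  have in_E: "in_E_up_to_zeros (d, e, P)" if "(d, e, P) \<in> E" for d e P
    using that unfolding in_E_up_to_zeros_def prod.case by (intro exI[of _ 0]) simp
  have not_in_E: "\<not> in_E_up_to_zeros (16, 16, replicate 6 9 @ replicate 3 3)"
    "\<not> in_E_up_to_zeros (25, 25, replicate 6 14 @ replicate 3 5)"
    using listed_classes_not_in_E by (simp_all add: in_E_up_to_zeros_def)
  show ?thesis
    unfolding good_classes_eq_candidates[OF order_refl] good_classes_eq_candidates[OF one_le_numeral]
      candidates_1 candidates_2 candidates_3 candidates_4 candidates_5 candidates_6 candidates_7 candidates_8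
    by (simp only: filter.simps listed_classes_in_E[THEN in_E] not_in_E if_True if_False list.set simp_thms)
qed

end
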